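(* Let $\alpha_1,\dots,\alpha_n$ be PL arcs in the plane with a common endpoint $z$ such that $\alpha_i\cap\alpha_j$ is connected for all $i,j$. Then $\bigcup_{i=1}^n\alpha_i$ is a tree.
   Context: A set $X\subset\mathbb{R}^2$ is a tree if it is connected, simply connected, and homeomorphic to a union of finitely many straight line segments. *)

theory Defs
  imports "HOL-Analysis.Analysis"
begin

fun polygonal_path :: "'a::real_normed_vector list \<Rightarrow> real \<Rightarrow> 'a" where
  "polygonal_path [] = linepath 0 0"
| "polygonal_path [a] = linepath a a"
| "polygonal_path [a, b] = linepath a b"
| "polygonal_path (a # b # c # xs) = linepath a b +++ polygonal_path (b # c # xs)"

definition pl_arc_path :: "(real \<Rightarrow> real^2) \<Rightarrow> bool" where
  "pl_arc_path g \<longleftrightarrow> arc g \<and> (\<exists>ps. length ps \<ge> 2 \<and> g = polygonal_path ps)"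

definition pl_arc_with_endpoint :: "(real^2) set \<Rightarrow> real^2 \<Rightarrow> bool" where
  "pl_arc_with_endpoint A z \<longleftrightarrow>
     (\<exists>g. pl_arc_path g \<and> path_image g = A \<and> z \<in> {pathstart g, pathfinish g})"

definition is_tree :: "(real^2) set \<Rightarrow> bool" where
  "is_tree X \<longleftrightarrow> connected X \<and> simply_connected X \<and>
     (\<exists>F :: (real^2) set set. finite F \<and> (\<forall>s\<in>F. \<exists>a b. s = closed_segment a b) \<and> X homeomorphic \<Union>F)"

end

theory Submission
  imports Defs
begin

text \<open>Adding the arcs one at a time, each new arc meets the union \<open>Y\<close> of the previous
  ones (together with \<open>z\<close>) in an initial segment: the parameters mapped into any earlier arc
  form a connected set containing \<open>0\<close>. Sliding the remaining tail of the arc back along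
  itself to the end of that segment deformation retracts the enlarged union onto \<open>Y\<close>, so
  simple connectivity is preserved. Being piecewise linear, the union is itself a finite
  union of segments.\<close>

lemma homotopy_eqv_Un_deformation_retract:
  fixes X A :: "'a::euclidean_space set"
  assumes "closed X" "closed A"
    and "continuous_on ({0..1::real} \<times> A) H"
    and imH: "\<And>t x. t \<in> {0..1} \<Longrightarrow> x \<in> A \<Longrightarrow> H (t, x) \<in> A"
    and H0: "\<And>x. x \<in> A \<Longrightarrow> H (0, x) = x"
    and H1: "\<And>x. x \<in> A \<Longrightarrow> H (1, x) \<in> X"
    and fixed: "\<And>t x. t \<in> {0..1} \<Longrightarrow> x \<in> A \<inter> X \<Longrightarrow> H (t, x) = x"
  shows "(X \<union> A) homotopy_eqv X"
proof -
  define K where "K = (\<lambda>p. if snd p \<in> X then snd p else H p)"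
  have "continuous_on ({0..1} \<times> X \<union> {0..1} \<times> A) K"
    unfolding K_def
    using assms fixed by (intro continuous_on_cases closed_Times) (auto intro: continuous_intros)
  then have contK: "continuous_on ({0..1} \<times> (X \<union> A)) K"
    by (simp add: Sigma_Un_distrib2)
  have imK: "K ` ({0..1} \<times> (X \<union> A)) \<subseteq> X \<union> A"
    using imH by (auto simp: K_def)
  define r where "r = K \<circ> Pair 1"
  have "homotopic_with_canon (\<lambda>x. True) (X \<union> A) (X \<union> A) id r"
    using contK imK
    by (auto simp: homotopic_with continuous_map_subtopology_eu subtopology_Times[symmetric]
        K_def H0 imH r_def intro!: exI[of _ K])
  moreover have "retraction (X \<union> A) X r"
  proof -
    have "continuous_on (X \<union> A) r"
      unfolding r_def by (rule continuous_on_o_Pair[OF contK]) auto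
    then show ?thesis
      using H1 by (auto simp: retraction_def r_def K_def)
  qed
  ultimately show ?thesis
    by (rule deformation_retract_imp_homotopy_eqv)
qed

lemma simply_connected_Un_arc_initial_segment:
  fixes a :: "real \<Rightarrow> 'a::euclidean_space"
  assumes "simply_connected X" "closed X" "arc a" "0 \<le> s" "s \<le> 1"
    and in_X_iff: "\<And>t. t \<in> {0..1} \<Longrightarrow> a t \<in> X \<longleftrightarrow> t \<le> s"
  shows "simply_connected (X \<union> path_image a)"
proof -
  obtain h where "homeomorphism {0..1} (path_image a) a h"
    using homeomorphism_arc \<open>arc a\<close> by blast
  then have h: "\<And>x. x \<in> path_image a \<Longrightarrow> h x \<in> {0..1} \<and> a (h x) = x"
    and cont_a: "continuous_on {0..1} a" and cont_h: "continuous_on (path_image a) h"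
    by (auto simp: homeomorphism_def)
  define H where "H = (\<lambda>(t, x). a (h x - t * max 0 (h x - s)))"
  have param_in: "h x - t * max 0 (h x - s) \<in> {0..1}" if "t \<in> {0..1}" "x \<in> path_image a" for t x
  proof -
    have "0 \<le> t * max 0 (h x - s)" "t * max 0 (h x - s) \<le> max 0 (h x - s)"
      using that by (simp_all add: mult_left_le_one_le)
    moreover have "max 0 (h x - s) \<le> h x" "h x \<le> 1"
      using h[OF that(2)] \<open>0 \<le> s\<close> by auto
    ultimately show ?thesis
      by (simp only: atLeastAtMost_iff) linarith
  qed
  have "(X \<union> path_image a) homotopy_eqv X"
  proof (rule homotopy_eqv_Un_deformation_retract)
    show "closed (path_image a)"
      using \<open>arc a\<close> by (simp add: arc_imp_path closed_path_image)
    show "continuous_on ({0..1} \<times> path_image a) H"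
      unfolding H_def case_prod_beta
      by (rule continuous_on_compose2[OF cont_a])
        (use param_in in \<open>auto intro!: continuous_intros continuous_on_compose2[OF cont_h]\<close>)
    show "H (t, x) \<in> path_image a" if "t \<in> {0..1}" "x \<in> path_image a" for t x
      using param_in[OF that] by (simp add: H_def path_image_def)
    show "H (0, x) = x" if "x \<in> path_image a" for x
      using h[OF that] by (simp add: H_def)
    show "H (1, x) \<in> X" if "x \<in> path_image a" for x
    proof -
      have "h x - max 0 (h x - s) = min (h x) s"
        by (auto simp: max_def min_def)
      then show ?thesis
        using h[OF that] \<open>0 \<le> s\<close> \<open>s \<le> 1\<close> in_X_iff[of "min (h x) s"] by (simp add: H_def)
    qed
    show "H (t, x) = x" if "x \<in> path_image a \<inter> X" for t x
      using h in_X_iff that by (force simp: H_def)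
  qed (use \<open>closed X\<close> in auto)
  then show ?thesis
    using \<open>simply_connected X\<close> homotopy_eqv_simple_connectedness by blast
qed

lemma simply_connected_Un_arc:
  fixes a :: "real \<Rightarrow> 'a::euclidean_space"
  assumes "simply_connected X" "closed X" "arc a" "pathstart a \<in> X"
    and initial: "\<And>t u. t \<in> {0..1} \<Longrightarrow> a t \<in> X \<Longrightarrow> u \<in> {0..t} \<Longrightarrow> a u \<in> X"
  shows "simply_connected (X \<union> path_image a)"
proof -
  define S where "S = {0..1} \<inter> a -` X"
  have "closed S"
    unfolding S_def using \<open>arc a\<close> \<open>closed X\<close>
    by (intro continuous_closed_preimage) (auto simp: arc_def path_def)
  moreover have "bdd_above S" "0 \<in> S"
    using \<open>pathstart a \<in> X\<close> by (auto simp: S_def pathstart_def)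
  ultimately have "Sup S \<in> S"
    by (auto intro: closed_contains_Sup)
  then have "0 \<le> Sup S" "Sup S \<le> 1"
    by (auto simp: S_def)
  moreover have "a t \<in> X \<longleftrightarrow> t \<le> Sup S" if "t \<in> {0..1}" for t
    using initial[of "Sup S" t] cSup_upper[OF _ \<open>bdd_above S\<close>, of t] \<open>Sup S \<in> S\<close> that
    by (auto simp: S_def)
  ultimately show ?thesis
    using simply_connected_Un_arc_initial_segment assms(1-3) by blast
qed

lemma arc_initial_segment_in:
  fixes a :: "real \<Rightarrow> 'a::euclidean_space"
  assumes "arc a" "pathstart a \<in> B" "connected (B \<inter> path_image a)"
    and "t \<in> {0..1}" "a t \<in> B" "u \<in> {0..t}"
  shows "a u \<in> B"
proof -
  obtain h where "homeomorphism {0..1} (path_image a) a h"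
    using homeomorphism_arc \<open>arc a\<close> by blast
  then have h: "\<And>x. x \<in> path_image a \<Longrightarrow> h x \<in> {0..1} \<and> a (h x) = x"
    and a: "\<And>t. t \<in> {0..1} \<Longrightarrow> a t \<in> path_image a \<and> h (a t) = t"
    and cont_h: "continuous_on (path_image a) h"
    by (auto simp: homeomorphism_def)
  have "connected (h ` (B \<inter> path_image a))"
    using \<open>connected (B \<inter> path_image a)\<close>
    by (intro connected_continuous_image continuous_on_subset[OF cont_h]) auto
  moreover have "0 \<in> h ` (B \<inter> path_image a)"
    using a[of 0] assms(2) by (intro image_eqI[of _ h "a 0"]) (auto simp: pathstart_def)
  moreover have "t \<in> h ` (B \<inter> path_image a)"
    using a[of t] assms(4,5) by (intro image_eqI[of _ h "a t"]) auto
  ultimately have "u \<in> h ` (B \<inter> path_image a)"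
    using \<open>u \<in> {0..t}\<close> by (auto simp: connected_iff_interval)
  then show ?thesis
    using h by auto
qed

text \<open>The common endpoint is added so that the empty family is a valid base case.\<close>

lemma simply_connected_Union_arcs:
  fixes z :: "'a::euclidean_space" and \<A> :: "'a set set"
  assumes "finite \<A>"
    and "\<And>A. A \<in> \<A> \<Longrightarrow> \<exists>a. arc a \<and> path_image a = A \<and> pathstart a = z"
    and "\<And>A B. A \<in> \<A> \<Longrightarrow> B \<in> \<A> \<Longrightarrow> connected (A \<inter> B)"
  shows "simply_connected (insert z (\<Union>\<A>))"
  using assms
proof (induction \<A> rule: finite_induct)
  case empty
  then show ?case
    by (simp add: convex_imp_simply_connected)
next
  case (insert A \<A>)
  define X where "X = insert z (\<Union>\<A>)"
  obtain a where a: "arc a" "path_image a = A" "pathstart a = z"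
    using insert.prems(1)[of A] by auto
  have "closed B" if "B \<in> \<A>" for B
    using insert.prems(1)[of B] that by (auto intro: closed_path_image arc_imp_path)
  then have "closed X"
    unfolding X_def using insert.hyps(1) by (intro closed_insert closed_Union) auto
  have "{z} \<inter> path_image a = {z}"
    using a pathstart_in_path_image[of a] by blast
  then have "connected ({z} \<inter> path_image a)"
    by simp
  then have "a u \<in> {z}" if "t \<in> {0..1}" "a t \<in> {z}" "u \<in> {0..t}" for t u
    using arc_initial_segment_in[OF \<open>arc a\<close> _ _ that] a(3) by blast
  moreover have "a u \<in> B" if "B \<in> \<A>" "t \<in> {0..1}" "a t \<in> B" "u \<in> {0..t}" for B t u
  proof (rule arc_initial_segment_in[OF \<open>arc a\<close> _ _ that(2-4)])
    show "pathstart a \<in> B"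
      using insert.prems(1)[of B] a(3) that(1) by (metis insertCI pathstart_in_path_image)
    show "connected (B \<inter> path_image a)"
      using insert.prems(2)[of B A] a(2) that(1) by simp
  qed
  ultimately have initial: "a u \<in> X" if "t \<in> {0..1}" "a t \<in> X" "u \<in> {0..t}" for t u
    using that unfolding X_def by blast
  moreover have "simply_connected X"
    unfolding X_def using insert.prems by (intro insert.IH) auto
  ultimately have "simply_connected (X \<union> path_image a)"
    using \<open>closed X\<close> a by (intro simply_connected_Un_arc) (auto simp: X_def)
  then show ?case
    by (simp add: X_def a(2) Un_commute)
qed

definition finite_segment_union :: "'a::real_vector set \<Rightarrow> bool" where
  "finite_segment_union X \<longleftrightarrow>
     (\<exists>F. finite F \<and> (\<forall>s\<in>F. \<exists>a b. s = closed_segment a b) \<and> X = \<Union>F)"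

lemma finite_segment_union_Union:
  assumes "finite \<X>" "\<And>X. X \<in> \<X> \<Longrightarrow> finite_segment_union X"
  shows "finite_segment_union (\<Union>\<X>)"
proof -
  have "\<forall>X\<in>\<X>. \<exists>F. finite F \<and> (\<forall>s\<in>F. \<exists>a b. s = closed_segment a b) \<and> \<Union>F = X"
    using assms(2) unfolding finite_segment_union_def by blast
  then obtain F where F: "\<forall>X\<in>\<X>. finite (F X) \<and> (\<forall>s\<in>F X. \<exists>a b. s = closed_segment a b) \<and> \<Union>(F X) = X"
    by (auto dest!: bchoice)
  have "\<Union>(\<Union>(F ` \<X>)) = (\<Union>X\<in>\<X>. \<Union>(F X))"
    by blast
  also have "\<dots> = \<Union>\<X>"
    using F by simp
  finally show ?thesis
    unfolding finite_segment_union_def using assms(1) F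
    by (intro exI[of _ "\<Union>(F ` \<X>)"]) blast
qed

lemma finite_segment_union_closed_segment: "finite_segment_union (closed_segment a b)"
  unfolding finite_segment_union_def by (intro exI[of _ "{closed_segment a b}"]) blast

lemma pathstart_polygonal_path: "ps \<noteq> [] \<Longrightarrow> pathstart (polygonal_path ps) = hd ps"
  by (induction ps rule: polygonal_path.induct) (auto simp: pathstart_join)

lemma finite_segment_union_polygonal_path:
  "finite_segment_union (path_image (polygonal_path ps))"
proof (induction ps rule: polygonal_path.induct)
  case (4 a b c xs)
  have "path_image (polygonal_path (a # b # c # xs)) =
      \<Union>{closed_segment a b, path_image (polygonal_path (b # c # xs))}"
    using pathstart_polygonal_path[of "b # c # xs"] by (simp add: path_image_join)
  also have "finite_segment_union \<dots>"
    using 4 finite_segment_union_closed_segment by (intro finite_segment_union_Union) auto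
  finally show ?case .
qed (simp_all only: polygonal_path.simps path_image_linepath finite_segment_union_closed_segment)

lemma pl_arc_with_endpoint_obtains_arc:
  assumes "pl_arc_with_endpoint A z"
  obtains a where "arc a" "path_image a = A" "pathstart a = z"
proof -
  obtain g where g: "arc g" "path_image g = A" "z \<in> {pathstart g, pathfinish g}"
    using assms unfolding pl_arc_with_endpoint_def pl_arc_path_def by blast
  show ?thesis
  proof (cases "z = pathstart g")
    case True
    then show ?thesis
      using g that by blast
  next
    case False
    then have "z = pathstart (reversepath g)"
      using g by auto
    then show ?thesis
      using g that[of "reversepath g"] by (simp add: arc_reversepath path_image_reversepath)
  qed
qed

lemma finite_segment_union_pl_arc:
  "pl_arc_with_endpoint A z \<Longrightarrow> finite_segment_union A"
  unfolding pl_arc_with_endpoint_def pl_arc_path_def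
  using finite_segment_union_polygonal_path by blast

lemma is_tree_Union_pl_arcs:
  fixes \<A> :: "(real^2) set set"
  assumes "finite \<A>" and pl: "\<And>A. A \<in> \<A> \<Longrightarrow> pl_arc_with_endpoint A z"
    and "\<And>A B. A \<in> \<A> \<Longrightarrow> B \<in> \<A> \<Longrightarrow> connected (A \<inter> B)"
  shows "is_tree (\<Union>\<A>)"
proof (cases "\<A> = {}")
  case False
  have arcs: "\<exists>a. arc a \<and> path_image a = A \<and> pathstart a = z" if "A \<in> \<A>" for A
    using pl_arc_with_endpoint_obtains_arc[OF pl[OF that]] by metis
  then have z_in: "z \<in> A" if "A \<in> \<A>" for A
    using that by (metis pathstart_in_path_image)
  have "simply_connected (insert z (\<Union>\<A>))"
    using assms(1) arcs assms(3) by (rule simply_connected_Union_arcs)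
  moreover have "insert z (\<Union>\<A>) = \<Union>\<A>"
    using False z_in by blast
  moreover have "connected (\<Union>\<A>)"
  proof (rule connected_Union)
    show "connected A" if "A \<in> \<A>" for A
      using arcs[OF that] by (metis arc_imp_path path_connected_imp_connected path_connected_path_image)
    show "\<Inter>\<A> \<noteq> {}"
      using False z_in by blast
  qed
  moreover have "finite_segment_union (\<Union>\<A>)"
    using assms(1) by (rule finite_segment_union_Union) (use pl finite_segment_union_pl_arc in blast)
  then obtain F where "finite F" "\<forall>s\<in>F. \<exists>a b. s = closed_segment a b" "\<Union>\<A> = \<Union>F"
    unfolding finite_segment_union_def by blast
  ultimately show ?thesis
    unfolding is_tree_def by (auto intro!: exI[of _ F] homeomorphic_refl)
qed (auto simp: is_tree_def intro!: exI[of _ "{}"])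

theorem mainTheorem8:
  fixes \<alpha> :: "nat \<Rightarrow> (real^2) set" and z :: "real^2" and n :: nat
  assumes "\<And>i. i \<in> {1..n} \<Longrightarrow> pl_arc_with_endpoint (\<alpha> i) z"
    and "\<And>i j. i \<in> {1..n} \<Longrightarrow> j \<in> {1..n} \<Longrightarrow> connected (\<alpha> i \<inter> \<alpha> j)"
  shows "is_tree (\<Union>i\<in>{1..n}. \<alpha> i)"
  using assms by (intro is_tree_Union_pl_arcs[where z = z]) auto

end
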